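(* Let $k$ be a field of characteristic $\neq 2$, $\mathcal A=k[t,t^{-1},(1-t)^{-1}]$, $t'=1-t^{-1}$, $t''=(1-t)^{-1}$, $\mathfrak g=\mathfrak{sl}_2(k)\otimes_k\mathcal A$, and let $\tau_1,\tau_2$ and $u_0,u_1,u_2$ be as in the context. Define $\mathfrak t=\{g\in\mathfrak g:\tau_1(g)=g,\ \tau_2(g)=g\}$, $\mathfrak g_0=\{g:\tau_1(g)=g,\ \tau_2(g)=-g\}$, $\mathfrak g_1=\{g:\tau_1(g)=-g,\ \tau_2(g)=g\}$, $\mathfrak g_2=\{g:\tau_1(g)=-g,\ \tau_2(g)=-g\}$. Then $\mathfrak t=0$, $\mathfrak g_0=u_0\mathcal A$, $\mathfrak g_1=u_1\mathcal A$ and $\mathfrak g_2=u_2\mathcal A$.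
   Context: Let $x=\begin{pmatrix}-1&2\\0&1\end{pmatrix}$, $y=\begin{pmatrix}-1&0\\-2&1\end{pmatrix}$, $z=\begin{pmatrix}1&0\\0&-1\end{pmatrix}$. $\tau_1$ is the $\mathcal A$-linear map of $\mathfrak g$ with $\tau_1(x\otimes 1)=-x\otimes 1$, $\tau_1(y\otimes 1)=-(z\otimes t'+x\otimes(t'-1))$, $\tau_1(z\otimes 1)=x\otimes t''+y\otimes(t''-1)$; $\tau_2$ is the $\mathcal A$-linear map with $\tau_2(x\otimes 1)=y\otimes t+z\otimes(t-1)$, $\tau_2(y\otimes 1)=-y\otimes 1$, $\tau_2(z\otimes 1)=-(x\otimes t''+y\otimes(t''-1))$. (These are commuting Lie algebra automorphisms of order $2$, corresponding to the permutations $(12)(30)$ and $(23)(10)$ of the $S_4$-action on the Tetrahedron algebra transported to $\mathfrak g$.) Also $u_0=\tfrac14(z\otimes 1+x\otimes t''+y\otimes(t''-1))$, $u_1=\tfrac14(x\otimes 1+y\otimes t+z\otimes(t-1))$, $u_2=\tfrac14(y\otimes 1+z\otimes t'+x\otimes(t'-1))$. *)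

theory Defs
  imports "HOL-Analysis.Finite_Cartesian_Product"
          "HOL-Computational_Algebra.Polynomial"
          "HOL-Computational_Algebra.Fraction_Field"
begin

type_synonym 'k rf = "'k poly fract"

type_synonym 'k mat2 = "'k rf ^ 2 ^ 2"

definition tvar :: "'k::field rf" where
  "tvar = Fract [:0, 1:] 1"

(* A = k[t, t^{-1}, (1-t)^{-1}] as a subring of k(t): elements p / (t^a (1-t)^b) *)
definition calA :: "'k::field rf set" where
  "calA = {Fract p ([:0, 1:] ^ a * [:1, -1:] ^ b) | p a b. True}"

definition tp :: "'k::field rf" where
  "tp = 1 - inverse tvar"

definition tpp :: "'k::field rf" where
  "tpp = inverse (1 - tvar)"

definition mat2 :: "'a \<Rightarrow> 'a \<Rightarrow> 'a \<Rightarrow> 'a \<Rightarrow> 'a ^ 2 ^ 2" where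
  "mat2 a b c d = (\<chi> i j. if i = 1 then (if j = 1 then a else b) else (if j = 1 then c else d))"

(* scalar multiplication of a matrix by an element of k(t); for a matrix M with
   entries in k and a in A this is M \<otimes> a *)
definition smat :: "'a::times \<Rightarrow> 'a ^ 2 ^ 2 \<Rightarrow> 'a ^ 2 ^ 2" where
  "smat a M = (\<chi> i j. a * M $ i $ j)"

definition xm :: "'k::field mat2" where "xm = mat2 (-1) 2 0 1"
definition ym :: "'k::field mat2" where "ym = mat2 (-1) 0 (-2) 1"
definition zm :: "'k::field mat2" where "zm = mat2 1 0 0 (-1)"

(* g = sl_2(k) \<otimes>_k A, realised as the trace-zero 2x2 matrices with entries in A *)
definition gset :: "'k::field mat2 set" where
  "gset = {M. (\<forall>i j. M $ i $ j \<in> calA) \<and> M $ 1 $ 1 + M $ 2 $ 2 = 0}"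

(* coordinates of M = x\<otimes>cx M + y\<otimes>cy M + z\<otimes>cz M (valid since char k \<noteq> 2) *)
definition cx :: "'k::field mat2 \<Rightarrow> 'k rf" where "cx M = M $ 1 $ 2 / 2"
definition cy :: "'k::field mat2 \<Rightarrow> 'k rf" where "cy M = - (M $ 2 $ 1 / 2)"
definition cz :: "'k::field mat2 \<Rightarrow> 'k rf" where "cz M = M $ 1 $ 1 + cx M + cy M"

(* A-linear extension of the prescribed values on x\<otimes>1, y\<otimes>1, z\<otimes>1 *)
definition tau1 :: "'k::field mat2 \<Rightarrow> 'k mat2" where
  "tau1 M =
     smat (cx M) (- xm)
   + smat (cy M) (- (smat tp zm + smat (tp - 1) xm))
   + smat (cz M) (smat tpp xm + smat (tpp - 1) ym)"

definition tau2 :: "'k::field mat2 \<Rightarrow> 'k mat2" where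
  "tau2 M =
     smat (cx M) (smat tvar ym + smat (tvar - 1) zm)
   + smat (cy M) (- ym)
   + smat (cz M) (- (smat tpp xm + smat (tpp - 1) ym))"

definition u0 :: "'k::field mat2" where
  "u0 = smat (1/4) (zm + smat tpp xm + smat (tpp - 1) ym)"
definition u1 :: "'k::field mat2" where
  "u1 = smat (1/4) (xm + smat tvar ym + smat (tvar - 1) zm)"
definition u2 :: "'k::field mat2" where
  "u2 = smat (1/4) (ym + smat tp zm + smat (tp - 1) xm)"

definition tfix :: "'k::field mat2 set" where "tfix = {g \<in> gset. tau1 g = g \<and> tau2 g = g}"
definition g0 :: "'k::field mat2 set" where "g0 = {g \<in> gset. tau1 g = g \<and> tau2 g = - g}"
definition g1 :: "'k::field mat2 set" where "g1 = {g \<in> gset. tau1 g = - g \<and> tau2 g = g}"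
definition g2 :: "'k::field mat2 set" where "g2 = {g \<in> gset. tau1 g = - g \<and> tau2 g = - g}"

definition spanA :: "'k::field mat2 \<Rightarrow> 'k mat2 set" where
  "spanA u = {smat a u | a. a \<in> calA}"

end

theory Submission
  imports Defs "HOL-Analysis.Cartesian_Space"
begin

(* Write g = x \<otimes> a + y \<otimes> b + z \<otimes> c. Since 2 is invertible, the coordinates a, b, c lie in A
   exactly when the matrix entries do, and \<tau>1, \<tau>2 act on them by explicit A-linear formulas.
   So a joint eigenspace {g. \<tau>1 g = \<epsilon>1 g, \<tau>2 g = \<epsilon>2 g} is cut out by a linear system
   over k(t). For the signs (+,+) it forces 4 a t = 0, hence g = 0; for the other three sign
   pairs it expresses all coordinates as A-multiples of a single one, with coefficient vector
   that of 4 u_i. Since 1/4 lies in A, the A-span of 4 u_i is u_i A. *)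

lemma two_neq_0_if_CHAR_neq_2:
  assumes "CHAR('a::{semiring_1, zero_neq_one}) \<noteq> 2"
  shows "(2 :: 'a) \<noteq> 0"
proof
  assume "(2 :: 'a) = 0"
  then have dvd: "CHAR('a) dvd 2" using of_nat_eq_0_iff_char_dvd[where 'a='a, of 2] by simp
  then have "CHAR('a) \<noteq> 0" by (metis dvd_0_left_iff zero_neq_numeral)
  with dvd show False using assms CHAR_not_1[where 'a='a] dvd_imp_le[OF dvd] by linarith
qed

lemma four_neq_0: "(2 :: 'a::semiring_1_no_zero_divisors) \<noteq> 0 \<Longrightarrow> (4 :: 'a) \<noteq> 0"
  by (metis mult_2 mult_eq_0_iff numeral_Bit0 one_add_one)

lemma CHAR_rf: "CHAR('k::field rf) = CHAR('k)"
proof (rule CHAR_eqI)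
  have "(of_nat n :: 'k rf) = 0 \<longleftrightarrow> (of_nat n :: 'k poly) = 0" for n
    by (simp add: of_nat_fract Zero_fract_def eq_fract)
  then show "of_nat CHAR('k) = (0 :: 'k rf)" "\<And>n. of_nat n = (0 :: 'k rf) \<Longrightarrow> CHAR('k) dvd n"
    by (simp_all add: of_nat_eq_0_iff_char_dvd)
qed

lemma mat2_eq_iff:
  "(M :: 'a ^ 2 ^ 2) = N \<longleftrightarrow>
     M $ 1 $ 1 = N $ 1 $ 1 \<and> M $ 1 $ 2 = N $ 1 $ 2 \<and> M $ 2 $ 1 = N $ 2 $ 1 \<and> M $ 2 $ 2 = N $ 2 $ 2"
  by (auto simp: vec_eq_iff forall_2)

lemma smat_nth [simp]: "smat s M $ i $ j = s * M $ i $ j"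
  by (simp add: smat_def)

lemma smat_1 [simp]: "smat 1 M = (M :: 'a::monoid_mult ^ 2 ^ 2)"
  by (simp add: mat2_eq_iff)

lemma smat_minus_1 [simp]: "smat (- 1) M = - (M :: 'a::ring_1 ^ 2 ^ 2)"
  by (simp add: mat2_eq_iff)

lemma smat_smat: "smat s (smat r M) = smat (s * r) (M :: 'a::semigroup_mult ^ 2 ^ 2)"
  by (simp add: smat_def mult.assoc)

lemma calA_denominator_neq_0:
  "([:0, 1:] ^ a * [:1, -1:] ^ b :: 'k::field poly) \<noteq> 0"
  by (simp add: pCons_eq_0_iff)

lemma calA_add:
  assumes "x \<in> calA" "y \<in> calA" shows "x + y \<in> (calA :: 'k::field rf set)"
proof -
  obtain p a b where x: "x = Fract p ([:0, 1:] ^ a * [:1, -1:] ^ b)"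
    using assms(1) unfolding calA_def by blast
  obtain q c d where y: "y = Fract q ([:0, 1:] ^ c * [:1, -1:] ^ d)"
    using assms(2) unfolding calA_def by blast
  have "x + y = Fract (p * ([:0, 1:] ^ c * [:1, -1:] ^ d) + q * ([:0, 1:] ^ a * [:1, -1:] ^ b))
      ([:0, 1:] ^ (a + c) * [:1, -1:] ^ (b + d))"
    unfolding x y by (simp add: calA_denominator_neq_0 power_add algebra_simps)
  then show ?thesis unfolding calA_def by blast
qed

lemma calA_mult:
  assumes "x \<in> calA" "y \<in> calA" shows "x * y \<in> (calA :: 'k::field rf set)"
proof -
  obtain p a b where x: "x = Fract p ([:0, 1:] ^ a * [:1, -1:] ^ b)"
    using assms(1) unfolding calA_def by blast
  obtain q c d where y: "y = Fract q ([:0, 1:] ^ c * [:1, -1:] ^ d)"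
    using assms(2) unfolding calA_def by blast
  have "x * y = Fract (p * q) ([:0, 1:] ^ (a + c) * [:1, -1:] ^ (b + d))"
    unfolding x y by (simp add: power_add algebra_simps)
  then show ?thesis unfolding calA_def by blast
qed

lemma calA_poly: "Fract p 1 \<in> (calA :: 'k::field rf set)"
proof -
  have "Fract p 1 = Fract p ([:0, 1:] ^ 0 * [:1, -1:] ^ 0)" by simp
  then show ?thesis unfolding calA_def by blast
qed

lemma calA_of_nat: "of_nat n \<in> (calA :: 'k::field rf set)"
  using calA_poly by (simp add: of_nat_fract)

lemma calA_numeral: "numeral n \<in> (calA :: 'k::field rf set)"
  using calA_of_nat[of "numeral n"] by simp

lemma calA_0: "0 \<in> (calA :: 'k::field rf set)"
  using calA_of_nat[of 0] by simp

lemma calA_1: "1 \<in> (calA :: 'k::field rf set)"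
  using calA_of_nat[of 1] by simp

lemma calA_uminus: assumes "x \<in> calA" shows "- x \<in> (calA :: 'k::field rf set)"
proof -
  have "Fract (-1) 1 = (-1 :: 'k rf)" by (simp add: One_fract_def)
  then show ?thesis using calA_mult[OF calA_poly[of "-1"] assms] by simp
qed

lemma calA_diff: assumes "x \<in> calA" "y \<in> calA" shows "x - y \<in> (calA :: 'k::field rf set)"
  using calA_add[OF assms(1) calA_uminus[OF assms(2)]] by simp

lemma calA_tvar: "tvar \<in> (calA :: 'k::field rf set)"
  unfolding tvar_def by (rule calA_poly)

lemma calA_inverse_tvar: "inverse tvar \<in> (calA :: 'k::field rf set)"
proof -
  have "inverse (tvar :: 'k rf) = Fract 1 ([:0, 1:] ^ 1 * [:1, -1:] ^ 0)"
    unfolding tvar_def by simp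
  then show ?thesis unfolding calA_def by blast
qed

lemma calA_tp: "tp \<in> (calA :: 'k::field rf set)"
  unfolding tp_def by (intro calA_diff calA_1 calA_inverse_tvar)

lemma calA_tpp: "tpp \<in> (calA :: 'k::field rf set)"
proof -
  have "1 - tvar = (Fract [:1, -1:] 1 :: 'k rf)"
    unfolding tvar_def One_fract_def by (simp add: one_pCons)
  then have "tpp = (Fract 1 ([:0, 1:] ^ 0 * [:1, -1:] ^ 1) :: 'k rf)"
    unfolding tpp_def by simp
  then show ?thesis unfolding calA_def by blast
qed

lemma calA_inverse_2: "inverse 2 \<in> (calA :: 'k::field rf set)"
proof -
  have "(2 :: 'k rf) = Fract [:2:] 1"
    by (metis Fract_of_nat_eq of_nat_numeral of_nat_poly pCons_0_0 smult_1_left smult_pCons)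
  \<comment> \<open>also in characteristic 2, where both sides are 0\<close>
  moreover have "inverse (Fract [:2:] 1) = (Fract [:inverse 2:] 1 :: 'k rf)"
    by (cases "(2 :: 'k) = 0") (simp_all add: eq_fract)
  ultimately have "inverse (2 :: 'k rf) = Fract [:inverse 2:] 1" by simp
  then show ?thesis by (simp only: calA_poly)
qed

lemma calA_inverse_4: "inverse 4 \<in> (calA :: 'k::field rf set)"
proof -
  have "inverse 4 = inverse 2 * (inverse 2 :: 'k rf)" by simp
  then show ?thesis using calA_mult[OF calA_inverse_2 calA_inverse_2] by simp
qed

lemma tvar_neq_0 [simp]: "(tvar :: 'k::field rf) \<noteq> 0"
  unfolding tvar_def Zero_fract_def by (simp add: eq_fract)

lemma tvar_neq_1 [simp]: "(tvar :: 'k::field rf) \<noteq> 1"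
  unfolding tvar_def One_fract_def by (simp add: eq_fract one_pCons)

lemma tvar_minus_1_mult_tpp_minus_1: "(tvar - 1) * (tpp - 1) = - (tvar :: 'k::field rf)"
  unfolding tpp_def by (simp add: field_simps)

lemma tp_mult_tpp: "tp * tpp = tp - (1 :: 'k::field rf)"
  unfolding tp_def tpp_def by (simp add: field_simps)

definition xyz :: "'k::field rf \<Rightarrow> 'k rf \<Rightarrow> 'k rf \<Rightarrow> 'k mat2" where
  "xyz a b c = smat a xm + smat b ym + smat c zm"

lemma xyz_nth [simp]:
  "xyz a b c $ 1 $ 1 = - a - b + c" "xyz a b c $ 1 $ 2 = 2 * a"
  "xyz a b c $ 2 $ 1 = - 2 * b" "xyz a b c $ 2 $ 2 = a + b - c"
  by (simp_all add: xyz_def xm_def ym_def zm_def mat2_def)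

lemma xyz_eq_iff:
  assumes "(2 :: 'k::field rf) \<noteq> 0"
  shows "(xyz a b c :: 'k mat2) = xyz a' b' c' \<longleftrightarrow> a = a' \<and> b = b' \<and> c = c'"
  using assms by (auto simp: mat2_eq_iff)

lemma smat_xyz: "smat s (xyz a b c) = xyz (s * a) (s * b) (s * c)"
  by (simp add: mat2_eq_iff algebra_simps)

lemma zero_eq_xyz: "0 = xyz 0 0 0"
  by (simp add: mat2_eq_iff)

lemma
  assumes "(2 :: 'k::field rf) \<noteq> 0"
  shows cx_xyz: "cx (xyz a b c :: 'k mat2) = a"
    and cy_xyz: "cy (xyz a b c :: 'k mat2) = b"
    and cz_xyz: "cz (xyz a b c :: 'k mat2) = c"
  using assms by (simp_all add: cx_def cy_def cz_def)

lemma xyz_cx_cy_cz: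
  assumes "(2 :: 'k::field rf) \<noteq> 0" and "(M :: 'k mat2) $ 1 $ 1 + M $ 2 $ 2 = 0"
  shows "M = xyz (cx M) (cy M) (cz M)"
proof -
  have "M $ 2 $ 2 = - M $ 1 $ 1" using assms(2) by (simp add: eq_neg_iff_add_eq_0 add.commute)
  then show ?thesis using assms(1) by (simp add: mat2_eq_iff cx_def cy_def cz_def)
qed

lemma gset_iff_xyz:
  assumes "(2 :: 'k::field rf) \<noteq> 0"
  shows "(M :: 'k mat2) \<in> gset \<longleftrightarrow> (\<exists>a\<in>calA. \<exists>b\<in>calA. \<exists>c\<in>calA. M = xyz a b c)"
proof
  assume M: "M \<in> gset"
  then have entries: "M $ i $ j \<in> calA" for i j unfolding gset_def by auto
  have "cx M \<in> calA" "cy M \<in> calA"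
    unfolding cx_def cy_def divide_inverse by (intro calA_uminus calA_mult entries calA_inverse_2)+
  moreover from calculation have "cz M \<in> calA" unfolding cz_def by (intro calA_add entries)
  moreover have "M = xyz (cx M) (cy M) (cz M)"
    using xyz_cx_cy_cz[OF assms] M unfolding gset_def by auto
  ultimately show "\<exists>a\<in>calA. \<exists>b\<in>calA. \<exists>c\<in>calA. M = xyz a b c" by blast
next
  assume "\<exists>a\<in>calA. \<exists>b\<in>calA. \<exists>c\<in>calA. M = xyz a b c"
  then obtain a b c where abc: "a \<in> calA" "b \<in> calA" "c \<in> calA" and M: "M = xyz a b c"
    by blast
  have "- a - b + c \<in> calA" "2 * a \<in> calA" "- 2 * b \<in> calA" "a + b - c \<in> calA"
    using abc by (metis calA_add calA_diff calA_uminus calA_mult calA_numeral)+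
  then have "M $ i $ j \<in> calA" for i j
    using exhaust_2[of i] exhaust_2[of j] unfolding M by auto
  then show "M \<in> gset" unfolding gset_def M by simp
qed

lemma smat_in_gset: "s \<in> calA \<Longrightarrow> M \<in> gset \<Longrightarrow> smat s M \<in> gset"
  unfolding gset_def by (auto simp: calA_mult distrib_left[symmetric])

lemma tau1_smat: "tau1 (smat s M) = smat s (tau1 M)"
  by (simp add: tau1_def cx_def cy_def cz_def mat2_eq_iff algebra_simps)

lemma tau2_smat: "tau2 (smat s M) = smat s (tau2 M)"
  by (simp add: tau2_def cx_def cy_def cz_def mat2_eq_iff algebra_simps)

lemma tau1_xyz:
  assumes "(2 :: 'k::field rf) \<noteq> 0"
  shows "tau1 (xyz a b c :: 'k mat2) =
           xyz (- a - b * (tp - 1) + c * tpp) (c * (tpp - 1)) (- b * tp)"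
  unfolding tau1_def cx_xyz[OF assms] cy_xyz[OF assms] cz_xyz[OF assms]
  by (simp add: mat2_eq_iff xm_def ym_def zm_def mat2_def algebra_simps)

lemma tau2_xyz:
  assumes "(2 :: 'k::field rf) \<noteq> 0"
  shows "tau2 (xyz a b c :: 'k mat2) =
           xyz (- c * tpp) (a * tvar - b - c * (tpp - 1)) (a * (tvar - 1))"
  unfolding tau2_def cx_xyz[OF assms] cy_xyz[OF assms] cz_xyz[OF assms]
  by (simp add: mat2_eq_iff xm_def ym_def zm_def mat2_def algebra_simps)

lemma tau1_xyz_eq_smat_iff:
  assumes "(2 :: 'k::field rf) \<noteq> 0"
  shows "tau1 (xyz a b c :: 'k mat2) = smat e (xyz a b c) \<longleftrightarrow>
           - a - b * (tp - 1) + c * tpp = e * a \<and> c * (tpp - 1) = e * b \<and> - b * tp = e * c"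
  by (simp add: tau1_xyz[OF assms] smat_xyz xyz_eq_iff[OF assms])

lemma tau2_xyz_eq_smat_iff:
  assumes "(2 :: 'k::field rf) \<noteq> 0"
  shows "tau2 (xyz a b c :: 'k mat2) = smat e (xyz a b c) \<longleftrightarrow>
           - c * tpp = e * a \<and> a * tvar - b - c * (tpp - 1) = e * b \<and> a * (tvar - 1) = e * c"
  by (simp add: tau2_xyz[OF assms] smat_xyz xyz_eq_iff[OF assms])

lemma spanA_0: "spanA 0 = {0}"
  unfolding spanA_def using calA_0 by (auto simp: smat_def zero_vec_def)

lemma spanA_smat_inverse:
  assumes "s \<in> calA" "inverse s \<in> calA" "s \<noteq> 0"
  shows "spanA (smat (inverse s) v) = spanA v"
proof (intro set_eqI iffI)
  fix g assume "g \<in> spanA (smat (inverse s) v)"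
  then obtain a where "a \<in> calA" "g = smat (a * inverse s) v"
    unfolding spanA_def by (auto simp: smat_smat)
  then show "g \<in> spanA v" unfolding spanA_def using assms(2) by (blast intro: calA_mult)
next
  fix g assume "g \<in> spanA v"
  then obtain a where a: "a \<in> calA" "g = smat a v" unfolding spanA_def by blast
  have "a * s * inverse s = a" using assms(3) by simp
  with a have "g = smat (a * s) (smat (inverse s) v)" by (metis smat_smat)
  then show "g \<in> spanA (smat (inverse s) v)"
    unfolding spanA_def using a(1) assms(1) by (blast intro: calA_mult)
qed

lemma spanA_smat_inverse_4:
  assumes "(2 :: 'k::field rf) \<noteq> 0"
  shows "spanA (smat (inverse 4) v) = spanA (v :: 'k mat2)"
  using spanA_smat_inverse[OF calA_numeral calA_inverse_4 four_neq_0[OF assms]] .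

lemma
  shows u0_eq: "u0 = smat (inverse 4) (xyz tpp (tpp - 1) 1)"
    and u1_eq: "u1 = smat (inverse 4) (xyz 1 tvar (tvar - 1))"
    and u2_eq: "u2 = smat (inverse 4) (xyz (tp - 1) 1 tp)"
  unfolding u0_def u1_def u2_def xyz_def divide_inverse smat_1 mult_1 by (simp_all only: ac_simps)

definition joint_eigenspace :: "'k::field rf \<Rightarrow> 'k rf \<Rightarrow> 'k mat2 set" where
  "joint_eigenspace e1 e2 = {g \<in> gset. tau1 g = smat e1 g \<and> tau2 g = smat e2 g}"

lemma
  shows tfix_eq_joint_eigenspace: "tfix = joint_eigenspace 1 1"
    and g0_eq_joint_eigenspace: "g0 = joint_eigenspace 1 (- 1)"
    and g1_eq_joint_eigenspace: "g1 = joint_eigenspace (- 1) 1"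
    and g2_eq_joint_eigenspace: "g2 = joint_eigenspace (- 1) (- 1)"
  by (simp_all add: joint_eigenspace_def tfix_def g0_def g1_def g2_def)

lemma spanA_subset_joint_eigenspace:
  assumes "v \<in> gset" "tau1 v = smat e1 v" "tau2 v = smat e2 v"
  shows "spanA v \<subseteq> joint_eigenspace e1 e2"
proof
  fix g assume "g \<in> spanA v"
  then obtain s where "s \<in> calA" and g: "g = smat s v" unfolding spanA_def by blast
  then have "g \<in> gset" using assms(1) smat_in_gset by blast
  moreover have "tau1 g = smat e1 g" "tau2 g = smat e2 g"
    unfolding g tau1_smat tau2_smat assms(2,3) smat_smat by (simp_all add: mult.commute)
  ultimately show "g \<in> joint_eigenspace e1 e2" unfolding joint_eigenspace_def by blast
qed

lemma joint_eigenspace_eq_spanA: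
  assumes two: "(2 :: 'k::field rf) \<noteq> 0"
    and v: "v \<in> gset" "tau1 v = smat e1 v" "tau2 v = smat e2 v"
    and solve: "\<And>a b c. a \<in> calA \<Longrightarrow> b \<in> calA \<Longrightarrow> c \<in> calA \<Longrightarrow>
      tau1 (xyz a b c) = smat e1 (xyz a b c) \<Longrightarrow> tau2 (xyz a b c) = smat e2 (xyz a b c) \<Longrightarrow>
      \<exists>s\<in>calA. xyz a b c = smat s v"
  shows "joint_eigenspace e1 e2 = (spanA v :: 'k mat2 set)"
proof
  show "joint_eigenspace e1 e2 \<subseteq> spanA v"
  proof
    fix g assume g: "g \<in> joint_eigenspace e1 e2"
    then obtain a b c where "a \<in> calA" "b \<in> calA" "c \<in> calA" "g = xyz a b c"
      unfolding joint_eigenspace_def gset_iff_xyz[OF two] by blast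
    with g solve show "g \<in> spanA v" unfolding joint_eigenspace_def spanA_def by blast
  qed
  show "spanA v \<subseteq> joint_eigenspace e1 e2"
    using spanA_subset_joint_eigenspace[OF v] .
qed

lemma tfix_eq_0:
  assumes two: "(2 :: 'k::field rf) \<noteq> 0"
  shows "(tfix :: 'k mat2 set) = {0}"
proof -
  \<comment> \<open>{0} is spanA 0, so the general scheme applies with v = 0\<close>
  have "joint_eigenspace 1 1 = spanA (0 :: 'k mat2)"
  proof (rule joint_eigenspace_eq_spanA[OF two])
    show "(0 :: 'k mat2) \<in> gset" unfolding gset_def using calA_0 by simp
    show "tau1 0 = smat 1 (0 :: 'k mat2)" "tau2 0 = smat 1 (0 :: 'k mat2)"
      by (simp_all add: tau1_def tau2_def cx_def cy_def cz_def smat_def zero_vec_def)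
    fix a b c :: "'k rf"
    assume "tau1 (xyz a b c) = smat 1 (xyz a b c)" "tau2 (xyz a b c) = smat 1 (xyz a b c)"
    then have b: "c * (tpp - 1) = b" and c: "a * (tvar - 1) = c"
      and mid: "a * tvar - b - c * (tpp - 1) = b"
      unfolding tau1_xyz_eq_smat_iff[OF two] tau2_xyz_eq_smat_iff[OF two] by simp_all
    have "b = a * (tvar - 1) * (tpp - 1)" using b c by simp
    also have "\<dots> = - a * tvar" by (simp add: tvar_minus_1_mult_tpp_minus_1 mult.assoc)
    finally have "b = - a * tvar" .
    moreover from mid b have "a * tvar - b - b = b" by simp
    ultimately have "4 * (a * tvar) = 0" by (simp add: algebra_simps)
    then have "a = 0" using four_neq_0[OF two] by simp
    with b c have "xyz a b c = smat 0 0" by (simp add: zero_eq_xyz smat_xyz)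
    then show "\<exists>s\<in>calA. xyz a b c = smat s 0" using calA_0 by blast
  qed
  then show ?thesis by (simp add: tfix_eq_joint_eigenspace spanA_0)
qed

lemma g0_eq_spanA_u0:
  assumes two: "(2 :: 'k::field rf) \<noteq> 0"
  shows "(g0 :: 'k mat2 set) = spanA u0"
proof -
  let ?v = "xyz tpp (tpp - 1) 1 :: 'k mat2"
  have "joint_eigenspace 1 (- 1) = spanA ?v"
  proof (rule joint_eigenspace_eq_spanA[OF two])
    show "?v \<in> gset"
      unfolding gset_iff_xyz[OF two] using calA_tpp calA_1 calA_diff by blast
    show "tau1 ?v = smat 1 ?v" "tau2 ?v = smat (- 1) ?v"
      unfolding tau1_xyz_eq_smat_iff[OF two] tau2_xyz_eq_smat_iff[OF two]
      by (simp_all add: tp_def tpp_def field_simps)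
    fix a b c :: "'k rf"
    assume "c \<in> calA" and
      "tau1 (xyz a b c) = smat 1 (xyz a b c)" "tau2 (xyz a b c) = smat (- 1) (xyz a b c)"
    moreover from this(2,3) have "b = c * (tpp - 1)" "a = c * tpp"
      unfolding tau1_xyz_eq_smat_iff[OF two] tau2_xyz_eq_smat_iff[OF two] by simp_all
    ultimately show "\<exists>s\<in>calA. xyz a b c = smat s ?v" by (auto simp: smat_xyz)
  qed
  then show ?thesis
    unfolding g0_eq_joint_eigenspace u0_eq spanA_smat_inverse_4[OF two] .
qed

lemma g1_eq_spanA_u1:
  assumes two: "(2 :: 'k::field rf) \<noteq> 0"
  shows "(g1 :: 'k mat2 set) = spanA u1"
proof -
  let ?v = "xyz 1 tvar (tvar - 1) :: 'k mat2"
  have "joint_eigenspace (- 1) 1 = spanA ?v"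
  proof (rule joint_eigenspace_eq_spanA[OF two])
    show "?v \<in> gset"
      unfolding gset_iff_xyz[OF two] using calA_tvar calA_1 calA_diff by blast
    show "tau1 ?v = smat (- 1) ?v" "tau2 ?v = smat 1 ?v"
      unfolding tau1_xyz_eq_smat_iff[OF two] tau2_xyz_eq_smat_iff[OF two]
      by (simp_all add: tp_def tpp_def field_simps)
    fix a b c :: "'k rf"
    assume "a \<in> calA" and
      "tau1 (xyz a b c) = smat (- 1) (xyz a b c)" "tau2 (xyz a b c) = smat 1 (xyz a b c)"
    moreover from this(3) have c: "c = a * (tvar - 1)" and mid: "a * tvar - b - c * (tpp - 1) = b"
      unfolding tau2_xyz_eq_smat_iff[OF two] by simp_all
    moreover have "b = a * tvar"
    proof -
      have "c * (tpp - 1) = - a * tvar"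
        by (simp add: c tvar_minus_1_mult_tpp_minus_1 mult.assoc)
      with mid have "a * tvar - b + a * tvar = b" by simp
      with two show ?thesis by (auto simp: algebra_simps)
    qed
    ultimately show "\<exists>s\<in>calA. xyz a b c = smat s ?v" by (auto simp: smat_xyz)
  qed
  then show ?thesis
    unfolding g1_eq_joint_eigenspace u1_eq spanA_smat_inverse_4[OF two] .
qed

lemma g2_eq_spanA_u2:
  assumes two: "(2 :: 'k::field rf) \<noteq> 0"
  shows "(g2 :: 'k mat2 set) = spanA u2"
proof -
  let ?v = "xyz (tp - 1) 1 tp :: 'k mat2"
  have "joint_eigenspace (- 1) (- 1) = spanA ?v"
  proof (rule joint_eigenspace_eq_spanA[OF two])
    show "?v \<in> gset"
      unfolding gset_iff_xyz[OF two] using calA_tp calA_1 calA_diff by blast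
    show "tau1 ?v = smat (- 1) ?v" "tau2 ?v = smat (- 1) ?v"
      unfolding tau1_xyz_eq_smat_iff[OF two] tau2_xyz_eq_smat_iff[OF two]
      by (simp_all add: tp_def tpp_def field_simps)
    fix a b c :: "'k rf"
    assume "b \<in> calA" and
      "tau1 (xyz a b c) = smat (- 1) (xyz a b c)" "tau2 (xyz a b c) = smat (- 1) (xyz a b c)"
    moreover from this(2,3) have c: "c = b * tp" and "a = c * tpp"
      unfolding tau1_xyz_eq_smat_iff[OF two] tau2_xyz_eq_smat_iff[OF two] by simp_all
    moreover from this have "a = b * (tp - 1)"
      by (simp add: tp_mult_tpp flip: mult.assoc)
    ultimately show "\<exists>s\<in>calA. xyz a b c = smat s ?v" by (auto simp: smat_xyz)
  qed
  then show ?thesis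
    unfolding g2_eq_joint_eigenspace u2_eq spanA_smat_inverse_4[OF two] .
qed

theorem theorem2p1:
  assumes "CHAR('k::field) \<noteq> 2"
  shows "(tfix :: 'k mat2 set) = {0} \<and>
         (g0 :: 'k mat2 set) = spanA u0 \<and>
         (g1 :: 'k mat2 set) = spanA u1 \<and>
         (g2 :: 'k mat2 set) = spanA u2"
  using two_neq_0_if_CHAR_neq_2[where 'a="'k rf"] assms
  by (simp add: CHAR_rf tfix_eq_0 g0_eq_spanA_u0 g1_eq_spanA_u1 g2_eq_spanA_u2)

end
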